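(* Let $N\geq 1$ be an integer. Then for all $0<x<\pi/2$, \[ 2+\sum_{k=1}^{N-1}\frac{k\cdot 2^{2k+3}|B_{2k+2}|}{(2k+2)!}x^{2k+2}+p_N x^{2N+1}\tan x<\left(\frac{x}{\sin x}\right)^2+\frac{x}{\tan x}<2+\sum_{k=1}^{N-1}\frac{k\cdot 2^{2k+3}|B_{2k+2}|}{(2k+2)!}x^{2k+2}+q_N x^{2N+1}\tan x, \] with the best possible constants $p_N=0$ and $q_N=\dfrac{N\cdot 2^{2N+3}|B_{2N+2}|}{(2N+2)!}$.
   Context: The Bernoulli numbers $B_n$ are defined by $\frac{t}{e^t-1}=\sum_{n=0}^\infty B_n\frac{t^n}{n!}$ for $|t|<2\pi$. An empty sum is understood to be zero. *)

theory Defs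
  imports "HOL-Analysis.Analysis"
begin

definition bernoulli :: "nat \<Rightarrow> real" where
  "bernoulli = (THE B. \<forall>t::real. 0 < \<bar>t\<bar> \<and> \<bar>t\<bar> < 2 * pi \<longrightarrow>
       (\<lambda>n. B n * t ^ n / fact n) sums (t / (exp t - 1)))"

definition thm8_coeff :: "nat \<Rightarrow> real" where
  "thm8_coeff k = real k * 2 ^ (2 * k + 3) * \<bar>bernoulli (2 * k + 2)\<bar> / fact (2 * k + 2)"

definition thm8_bound :: "nat \<Rightarrow> real \<Rightarrow> real \<Rightarrow> real" where
  "thm8_bound N c x = 2 + (\<Sum>k = 1..N - 1. thm8_coeff k * x ^ (2 * k + 2))
                       + c * x ^ (2 * N + 1) * tan x"

end

theory Submission
  imports Defs
begin

text \<open>Expanding the partial fractions of the cotangent geometrically gives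
  \<open>x cot x = 1 - (\<Sum>j. c j * x^(2j+2))\<close> with \<open>c j = 2 \<zeta>(2j+2) / \<pi>^(2j+2)\<close>, and the same
  identity at the imaginary point \<open>i t/2\<close> yields \<open>|B(2j+2)| = c j (2j+2)! / 4^(j+1)\<close>.
  Since \<open>(x / sin x)\<^sup>2 = x cot x - x (x cot x)'\<close>, the left-hand side is
  \<open>2 + (\<Sum>k. 2 k c k * x^(2k+2))\<close>, a series with exactly the coefficients of the theorem,
  all positive: this is the lower bound. For the upper bound the tail from \<open>N\<close> on is
  compared termwise with \<open>2 N c N x^(2N)\<close> times \<open>x tan x = (\<Sum>j. (4^(j+1) - 1) c j x^(2j+2))\<close>,
  which only needs that \<open>\<zeta>\<close> decreases, \<open>\<zeta> \<ge> 1\<close> and \<open>\<pi>\<^sup>2 < 10\<close>. The constants are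
  optimal because near \<open>\<pi>/2\<close> the left-hand side stays bounded while \<open>x^(2N+1) tan x\<close>
  does not, and near \<open>0\<close> the tail is \<open>2 N c N x^(2N+2)\<close> up to higher order terms.\<close>

section \<open>Partial fractions of the cotangent\<close>

lemma pi_cot_eq_Digamma_diff:
  fixes z :: complex
  assumes z: "z \<notin> \<int>"
  shows "of_real pi * cot (of_real pi * z) = Digamma (1 - z) - Digamma z"
proof -
  have z': "1 - z \<notin> \<int>"
    using z Ints_diff[OF Ints_1, of "1 - z"] by auto
  have nonpos: "z \<notin> \<int>\<^sub>\<le>\<^sub>0" "1 - z \<notin> \<int>\<^sub>\<le>\<^sub>0"
    using z z' nonpos_Ints_subset_Ints by blast+
  have "((\<lambda>u. rGamma u * rGamma (1 - u)) has_field_derivative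
          rGamma z * rGamma (1 - z) * (Digamma (1 - z) - Digamma z)) (at z)"
    by (auto intro!: derivative_eq_intros has_field_derivative_rGamma_no_nonpos_int
        DERIV_chain2[of rGamma] simp: nonpos algebra_simps)
  moreover have "((\<lambda>u. rGamma u * rGamma (1 - u)) has_field_derivative cos (of_real pi * z)) (at z)"
    unfolding rGamma_reflection_complex by (auto intro!: derivative_eq_intros)
  ultimately have "rGamma z * rGamma (1 - z) * (Digamma (1 - z) - Digamma z) = cos (of_real pi * z)"
    by (rule DERIV_unique)
  moreover have "sin (of_real pi * z) \<noteq> 0"
    using z by (auto simp: sin_eq_0 field_simps)
  ultimately show ?thesis
    by (simp add: rGamma_reflection_complex cot_def field_simps)
qed

lemma not_Ints_add_Ints_nonzero:
  fixes z :: "'a :: ring_1"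
  shows "z \<notin> \<int> \<Longrightarrow> n \<in> \<int> \<Longrightarrow> z + n \<noteq> 0"
  using minus_in_Ints_iff by (metis add_eq_0_iff)

lemma cot_partial_fractions:
  fixes w :: complex
  assumes w: "w / of_real pi \<notin> \<int>"
  shows "(\<lambda>k. 2 * w^2 / (w^2 - (of_nat k + 1)^2 * (of_real pi)^2)) sums (w * cot w - 1)"
proof -
  define z where "z = w / of_real pi"
  have z: "z \<notin> \<int>" and w_eq: "w = of_real pi * z"
    using w by (simp_all add: z_def)
  have z_ne: "z + n \<noteq> 0" if "n \<in> \<int>" for n
    by (rule not_Ints_add_Ints_nonzero[OF z that])
  have z_ne': "1 - z + n \<noteq> 0" if "n \<in> \<int>" for n
    using z_ne[of "- 1 - n"] that by (auto simp: algebra_simps)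
  have Digamma_sums: "(\<lambda>k. inverse (of_nat (Suc k)) - inverse (u + of_nat k)) sums (Digamma u + euler_mascheroni)"
    if "u \<noteq> 0" for u :: complex
    using summable_Digamma[OF that] by (simp add: Digamma_def summable_sums)
  have "(\<lambda>k. inverse (z + of_nat k) - inverse (1 - z + of_nat k)) sums (Digamma (1 - z) - Digamma z)"
    using sums_diff[OF Digamma_sums Digamma_sums, of "1 - z" z] z_ne[of 0] z_ne'[of 0] by simp
  moreover have "(\<lambda>k. inverse (z + of_nat k) - inverse (z + of_nat (Suc k))) sums (inverse z)"
  proof -
    have "(\<lambda>n. inverse (z + of_nat n)) \<longlonglongrightarrow> 0"
      by (intro filterlim_compose[OF tendsto_inverse_0]
          tendsto_add_filterlim_at_infinity[OF tendsto_const] tendsto_of_nat)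
    then show ?thesis using telescope_sums' by fastforce
  qed
  ultimately have "(\<lambda>k. inverse (z + of_nat (Suc k)) - inverse (1 - z + of_nat k))
      sums (of_real pi * cot (of_real pi * z) - inverse z)"
    using sums_diff pi_cot_eq_Digamma_diff[OF z] by fastforce
  from sums_mult[OF this, of z]
  have "(\<lambda>k. z * (inverse (z + of_nat (Suc k)) - inverse (1 - z + of_nat k)))
      sums (w * cot w - 1)"
    using z_ne[of 0] by (simp add: w_eq field_simps)
  moreover have "z * (inverse (z + of_nat (Suc k)) - inverse (1 - z + of_nat k))
      = 2 * w^2 / (w^2 - (of_nat k + 1)^2 * (of_real pi)^2)" for k
  proof -
    have "z^2 - (of_nat k + 1)^2 = (z + (of_nat k + 1)) * (z + - (of_nat k + 1))"
      by (simp add: algebra_simps power2_eq_square)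
    then have "z^2 - (of_nat k + 1)^2 \<noteq> 0"
      using z_ne[of "of_nat k + 1"] z_ne[of "- (of_nat k + 1)"] by auto
    then have "z * (inverse (z + of_nat (Suc k)) - inverse (1 - z + of_nat k))
        = 2 * z^2 / (z^2 - (of_nat k + 1)^2)"
      using z_ne[of "of_nat k + 1"] z_ne'[of "of_nat k"]
      by (simp add: field_simps power2_eq_square)
    also have "\<dots> = (of_real pi)^2 * (2 * z^2) / ((of_real pi)^2 * (z^2 - (of_nat k + 1)^2))"
      by simp
    also have "\<dots> = 2 * w^2 / (w^2 - (of_nat k + 1)^2 * (of_real pi)^2)"
      by (simp add: w_eq algebra_simps)
    finally show ?thesis .
  qed
  ultimately show ?thesis by simp
qed

section \<open>The Taylor series of \<open>x cot x\<close>\<close>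

definition zeta_nat :: "nat \<Rightarrow> real" where
  "zeta_nat n = (\<Sum>k. 1 / (real k + 1) ^ n)"

lemma zeta_nat_sums:
  assumes "2 \<le> n"
  shows "(\<lambda>k. 1 / (real k + 1) ^ n) sums zeta_nat n"
proof -
  have "summable (\<lambda>k. 1 / (real k + 1) ^ 2)"
    using inverse_squares_sums by (simp add: sums_iff add.commute)
  then have "summable (\<lambda>k. 1 / (real k + 1) ^ n)"
    by (rule summable_comparison_test')
      (use assms in \<open>auto intro!: frac_le power_increasing\<close>)
  then show ?thesis
    by (simp add: zeta_nat_def summable_sums)
qed

lemma zeta_nat_2: "zeta_nat 2 = pi^2 / 6"
  using sums_unique2[OF zeta_nat_sums[of 2]] inverse_squares_sums by (simp add: add.commute)

lemma zeta_nat_ge_1: "2 \<le> n \<Longrightarrow> 1 \<le> zeta_nat n"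
  using sum_le_suminf[OF sums_summable[OF zeta_nat_sums], of n "{0}"]
  by (simp add: zeta_nat_def)

lemma zeta_nat_antimono: "2 \<le> m \<Longrightarrow> m \<le> n \<Longrightarrow> zeta_nat n \<le> zeta_nat m"
  unfolding zeta_nat_def
  by (rule suminf_le) (auto intro!: frac_le power_increasing sums_summable[OF zeta_nat_sums])

definition cot_coeff :: "nat \<Rightarrow> real" where
  "cot_coeff j = 2 * zeta_nat (2 * j + 2) / pi ^ (2 * j + 2)"

definition cot_tail :: "real \<Rightarrow> real" where
  "cot_tail s = (\<Sum>j. cot_coeff j * s ^ (j + 1))"

lemma cot_coeff_pos: "0 < cot_coeff j"
  using zeta_nat_ge_1[of "2 * j + 2"] by (simp add: cot_coeff_def)

lemma cot_coeff_0: "cot_coeff 0 = 1 / 3"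
  unfolding cot_coeff_def by (simp add: zeta_nat_2 flip: numeral_2_eq_2)

lemma double_sums_swap:
  fixes f :: "nat \<Rightarrow> nat \<Rightarrow> real"
  assumes row: "\<And>k. (\<lambda>j. f k j) sums g k"
    and row_abs: "\<And>k. (\<lambda>j. \<bar>f k j\<bar>) sums h k"
    and "summable h"
    and col: "\<And>j. (\<lambda>k. f k j) sums c j"
  shows "\<exists>S. g sums S \<and> c sums S"
proof -
  have h_nonneg: "h k \<ge> 0" for k
    using sums_le[OF _ sums_zero row_abs[of k]] by simp
  have "(\<lambda>(k, j). \<bar>f k j\<bar>) summable_on UNIV \<times> UNIV"
  proof (rule summable_on_SigmaI[where g = h])
    show "((\<lambda>j. case (k, j) of (k, j) \<Rightarrow> \<bar>f k j\<bar>) has_sum h k) UNIV" for k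
      using sums_nonneg_imp_has_sum[OF row_abs[of k]] by simp
    show "h summable_on UNIV"
      using summable_nonneg_imp_summable_on[OF \<open>summable h\<close> h_nonneg] .
  qed auto
  then have "(\<lambda>x. norm ((\<lambda>(k, j). f k j) x)) summable_on UNIV \<times> UNIV"
    by (simp add: case_prod_unfold)
  then have "(\<lambda>(k, j). f k j) summable_on UNIV \<times> UNIV"
    by (rule abs_summable_summable)
  then obtain S where S: "((\<lambda>(k, j). f k j) has_sum S) (UNIV \<times> UNIV)"
    by (auto simp: summable_on_def)
  have "((\<lambda>j. f k j) has_sum g k) UNIV" for k
    using row_abs[of k] by (intro norm_summable_imp_has_sum row) (simp add: sums_iff)
  then have "(g has_sum S) UNIV"
    using has_sum_Sigma'[OF S] by simp
  moreover have S': "((\<lambda>(j, k). f k j) has_sum S) (UNIV \<times> UNIV)"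
    using iffD1[OF has_sum_swap[where f="\<lambda>(k, j). f k j" and A=UNIV and B=UNIV] S] by simp
  have "((\<lambda>k. f k j) has_sum c j) UNIV" for j
  proof -
    have "(\<lambda>k. f k j) summable_on UNIV"
      using summable_on_SigmaD1[of "\<lambda>j k. f k j" UNIV "\<lambda>_. UNIV" j] S'
      by (auto simp: summable_on_def)
    then have "((\<lambda>k. f k j) has_sum infsum (\<lambda>k. f k j) UNIV) UNIV"
      by (rule has_sum_infsum)
    moreover from this have "infsum (\<lambda>k. f k j) UNIV = c j"
      using col[of j] by (blast dest: has_sum_imp_sums intro: sums_unique2)
    ultimately show ?thesis
      by simp
  qed
  then have "(c has_sum S) UNIV"
    using has_sum_Sigma'[OF S'] by simp
  ultimately show ?thesis
    by (blast intro: has_sum_imp_sums)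
qed

text \<open>Expanding each partial fraction as a geometric series in \<open>s / ((k + 1)\<^sup>2 \<pi>\<^sup>2)\<close> and
  summing over \<open>k\<close> first produces the values of \<open>zeta_nat\<close> at even arguments.\<close>

lemma partial_fractions_eq_cot_series:
  fixes s :: real
  assumes s: "\<bar>s\<bar> < pi^2"
  shows "\<exists>S. (\<lambda>k. 2 * s / (s - (real k + 1)^2 * pi^2)) sums S
           \<and> (\<lambda>j. - (cot_coeff j * s^(j + 1))) sums S"
proof -
  define q where "q k = s / ((real k + 1)^2 * pi^2)" for k
  define r where "r = \<bar>s\<bar> / pi^2"
  have r: "0 \<le> r" "r < 1"
    using s by (auto simp: r_def)
  have q_le: "\<bar>q k\<bar> \<le> r" for k
    unfolding q_def r_def abs_divide by (intro divide_left_mono) auto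
  then have q_lt: "\<bar>q k\<bar> < 1" for k
    using r by (meson order.strict_trans1)
  have geometric: "(\<lambda>j. x ^ (j + 1)) sums (x / (1 - x))" if "\<bar>x\<bar> < 1" for x :: real
    using sums_mult[OF geometric_sums[of x], of x] that by (simp add: field_simps)
  show ?thesis
  proof (rule double_sums_swap[where f = "\<lambda>k j. -2 * q k ^ (j + 1)"])
    show "(\<lambda>j. -2 * q k ^ (j + 1)) sums (2 * s / (s - (real k + 1)^2 * pi^2))" for k
    proof -
      have "pi^2 \<le> (real k + 1)^2 * pi^2"
        by simp
      then have "s \<noteq> (real k + 1)^2 * pi^2"
        using s by linarith
      then have "-2 * (q k / (1 - q k)) = 2 * s / (s - (real k + 1)^2 * pi^2)"
        unfolding q_def by (simp add: field_simps)
      then show ?thesis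
        using sums_mult[OF geometric[OF q_lt[of k]], of "-2"] by simp
    qed
    show "(\<lambda>j. \<bar>-2 * q k ^ (j + 1)\<bar>) sums (2 * (\<bar>q k\<bar> / (1 - \<bar>q k\<bar>)))" for k
      using sums_mult[OF geometric[of "\<bar>q k\<bar>"], of 2] q_lt[of k]
      by (simp add: abs_mult power_abs)
    have "summable (\<lambda>k. 2 * \<bar>s\<bar> / (pi^2 * (1 - r)) * (1 / (real k + 1)^2))"
      by (intro summable_mult sums_summable[OF zeta_nat_sums]) simp
    then show "summable (\<lambda>k. 2 * (\<bar>q k\<bar> / (1 - \<bar>q k\<bar>)))"
    proof (rule summable_comparison_test')
      fix k
      have "2 * (\<bar>q k\<bar> / (1 - \<bar>q k\<bar>)) \<le> 2 * (\<bar>q k\<bar> / (1 - r))"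
        using q_le[of k] q_lt[of k] r by (intro mult_left_mono divide_left_mono) auto
      then show "norm (2 * (\<bar>q k\<bar> / (1 - \<bar>q k\<bar>)))
          \<le> 2 * \<bar>s\<bar> / (pi^2 * (1 - r)) * (1 / (real k + 1)^2)"
        using q_lt[of k] by (simp add: q_def abs_divide mult_ac)
    qed
    show "(\<lambda>k. -2 * q k ^ (j + 1)) sums (- (cot_coeff j * s^(j + 1)))" for j
    proof -
      have "((real k + 1)^2 * pi^2) ^ (j + 1) = (real k + 1)^(2 * (j + 1)) * pi^(2 * (j + 1))" for k
        by (simp only: power_mult_distrib power_mult)
      then have "-2 * q k ^ (j + 1) = -2 * s^(j + 1) / pi^(2 * j + 2) * (1 / (real k + 1)^(2 * j + 2))"
        for k
        by (simp add: q_def power_divide)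
      moreover have "(\<lambda>k. -2 * s^(j + 1) / pi^(2 * j + 2) * (1 / (real k + 1)^(2 * j + 2)))
          sums (- (cot_coeff j * s^(j + 1)))"
        using sums_mult[OF zeta_nat_sums[of "2 * j + 2"], of "-2 * s^(j + 1) / pi^(2 * j + 2)"]
        by (simp add: cot_coeff_def mult_ac)
      ultimately show ?thesis
        by simp
    qed
  qed
qed

lemma cot_tail_sums:
  "\<bar>s\<bar> < pi^2 \<Longrightarrow> (\<lambda>j. cot_coeff j * s^(j + 1)) sums cot_tail s"
  using partial_fractions_eq_cot_series[of s] summable_minus_iff
  by (fastforce simp: cot_tail_def sums_iff)

lemma partial_fractions_sums_cot_tail:
  "\<bar>s\<bar> < pi^2 \<Longrightarrow> (\<lambda>k. 2 * s / (s - (real k + 1)^2 * pi^2)) sums (- cot_tail s)"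
  using partial_fractions_eq_cot_series[of s] cot_tail_sums[of s]
  by (metis sums_minus sums_unique2)

lemma mult_cot_eq_cot_tail:
  fixes w :: complex
  assumes "w \<noteq> 0" "w^2 = of_real s" "\<bar>s\<bar> < pi^2"
  shows "w * cot w = of_real (1 - cot_tail s)"
proof -
  have "w / of_real pi \<notin> \<int>"
  proof
    assume "w / of_real pi \<in> \<int>"
    then obtain n where n: "w = of_int n * of_real pi"
      by (auto elim!: Ints_cases simp: field_simps)
    then have "complex_of_real s = of_real (of_int n ^ 2 * pi^2)"
      using assms(2) by (simp add: power_mult_distrib)
    then have "s = of_int n ^ 2 * pi^2"
      by (simp only: of_real_eq_iff)
    then have "real_of_int (n^2) < 1"
      using assms(3) by (simp add: abs_mult)
    then have "\<bar>n\<bar> < 1"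
      by (simp only: of_int_less_1_iff abs_square_less_1)
    then have "n = 0"
      by simp
    with n assms(1) show False
      by simp
  qed
  then have "(\<lambda>k. of_real (2 * s / (s - (real k + 1)^2 * pi^2))) sums (w * cot w - 1)"
    using cot_partial_fractions[of w] by (simp add: assms(2))
  moreover have "(\<lambda>k. complex_of_real (2 * s / (s - (real k + 1)^2 * pi^2)))
      sums of_real (- cot_tail s)"
    using partial_fractions_sums_cot_tail[OF assms(3)] by (simp only: sums_of_real_iff)
  ultimately have "w * cot w - 1 = of_real (- cot_tail s)"
    by (rule sums_unique2)
  then show ?thesis
    by (simp add: algebra_simps)
qed

lemma x_cot_x_eq_cot_tail:
  fixes x :: real
  assumes "x \<noteq> 0" "\<bar>x\<bar> < pi"
  shows "x * cot x = 1 - cot_tail (x^2)"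
proof -
  have "\<bar>x\<bar>^2 < pi^2"
    using assms by (intro power_strict_mono) auto
  then have "complex_of_real (x * cot x) = of_real (1 - cot_tail (x^2))"
    using mult_cot_eq_cot_tail[of "of_real x" "x^2"] assms
    by (simp flip: cot_of_real)
  then show ?thesis
    by (simp only: of_real_eq_iff)
qed

lemma t_div_exp_minus_one_eq_cot_tail:
  fixes t :: real
  assumes t: "t \<noteq> 0" "\<bar>t\<bar> < 2 * pi"
  shows "t / (exp t - 1) = 1 - t / 2 - cot_tail (- (t^2 / 4))"
proof -
  define u where "u = exp (t / 2)"
  have u: "0 < u" "u^2 = exp t"
    by (simp_all add: u_def power2_eq_square flip: exp_add)
  then have "u^2 \<noteq> 1"
    using t by simp
  then have u_ne: "u * u - 1 \<noteq> 0" "u * (u * u) - u \<noteq> 0"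
    using u by (auto simp: power2_eq_square algebra_simps)
  define w where "w = \<i> * complex_of_real (t / 2)"
  have cos_w: "cos w = of_real ((u + inverse u) / 2)"
    using cosh_real[of "t / 2"] by (simp add: w_def u_def)
  have "\<i> * (- \<i> * sin w) = \<i> * of_real ((u - inverse u) / 2)"
    using sinh_real[of "t / 2"] by (simp add: w_def u_def)
  then have sin_w: "sin w = \<i> * of_real ((u - inverse u) / 2)"
    by simp
  have "w * cot w = of_real (t / 2 * (((u + inverse u) / 2) / ((u - inverse u) / 2)))"
    unfolding cot_def cos_w sin_w by (simp add: w_def)
  also have "t / 2 * (((u + inverse u) / 2) / ((u - inverse u) / 2)) = t / (exp t - 1) + t / 2"
    using u(1) u_ne by (simp flip: u(2)) (simp add: field_simps power2_eq_square)
  finally have "w * cot w = of_real (t / (exp t - 1) + t / 2)" .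
  moreover have "\<bar>t\<bar>^2 < (2 * pi)^2"
    using t by (intro power_strict_mono) auto
  then have "w * cot w = of_real (1 - cot_tail (- (t^2 / 4)))"
    using t by (intro mult_cot_eq_cot_tail) (auto simp: w_def power_divide power_mult_distrib)
  ultimately have "t / (exp t - 1) + t / 2 = 1 - cot_tail (- (t^2 / 4))"
    by (simp only: of_real_eq_iff)
  then show ?thesis
    by simp
qed

section \<open>Bernoulli numbers\<close>

lemma powser_coeffs_unique_punctured:
  fixes a b :: "nat \<Rightarrow> 'a :: {real_normed_field, banach}"
  assumes "0 < r"
    and a: "\<And>x. x \<noteq> 0 \<Longrightarrow> norm x < r \<Longrightarrow> (\<lambda>n. a n * x^n) sums f x"
    and b: "\<And>x. x \<noteq> 0 \<Longrightarrow> norm x < r \<Longrightarrow> (\<lambda>n. b n * x^n) sums f x"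
  shows "a = b"
proof -
  define d where "d n = a n - b n" for n
  have d_sums: "(\<lambda>n. d n * x^n) sums 0" if "x \<noteq> 0" "norm x < r" for x
    using sums_diff[OF a b, OF that that] by (simp add: d_def algebra_simps)
  have "d m = 0" for m
  proof (induction m rule: less_induct)
    case (less m)
    have "(\<lambda>n. d (n + m) * x^n) sums 0" if x: "x \<noteq> 0" "norm x < r" for x
    proof -
      have "(\<lambda>n. d (n + m) * x^(n + m)) sums 0"
        using sums_iff_shift[of "\<lambda>n. d n * x^n" m 0] d_sums[OF x] less by simp
      from sums_divide[OF this, of "x^m"] show ?thesis
        using x by (simp add: power_add)
    qed
    then have "((\<lambda>_. 0) \<longlongrightarrow> d (0 + m)) (at (0 :: 'a))"
      by (intro powser_limit_0_strong[OF \<open>0 < r\<close>]) simp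
    then show "d m = 0"
      by (simp add: LIM_const_eq[symmetric])
  qed
  then show ?thesis
    by (auto simp: d_def fun_eq_iff)
qed

text \<open>Euler's formula \<open>B(2k+2) = (-1)^k 2 (2k+2)! \<zeta>(2k+2) / (2\<pi>)^(2k+2)\<close>.\<close>

definition bernoulli_explicit :: "nat \<Rightarrow> real" where
  "bernoulli_explicit n =
     (if n = 0 then 1 else if n = 1 then - 1 / 2 else if odd n then 0
      else (-1) ^ (n div 2 - 1) * cot_coeff (n div 2 - 1) * fact n / 4 ^ (n div 2))"

lemma bernoulli_explicit_sums:
  fixes t :: real
  assumes t: "\<bar>t\<bar> < 2 * pi"
  shows "(\<lambda>n. bernoulli_explicit n * t^n / fact n) sums (1 - t / 2 - cot_tail (- (t^2 / 4)))"
proof -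
  define g where "g n = bernoulli_explicit n * t^n / fact n" for n
  define s where "s = - (t^2 / 4)"
  have "\<bar>t\<bar>^2 < (2 * pi)^2"
    using t by (intro power_strict_mono) auto
  then have "\<bar>s\<bar> < pi^2"
    by (simp add: s_def power_mult_distrib)
  have "g (2 * j + 2) = - (cot_coeff j * s^(j + 1))" for j
  proof -
    have "t^(2 * j + 2) = (t^2)^(j + 1)"
      by (subst power_mult[symmetric]) (simp add: algebra_simps)
    then have "s^(j + 1) = (-1)^(j + 1) * t^(2 * j + 2) / 4^(j + 1)"
      by (simp add: s_def power_divide power_minus')
    then show ?thesis
      by (simp add: g_def bernoulli_explicit_def)
  qed
  then have "(\<lambda>j. g (2 * j + 2)) sums (- cot_tail s)"
    using sums_minus[OF cot_tail_sums[OF \<open>\<bar>s\<bar> < pi^2\<close>]] by simp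
  moreover have "(\<lambda>j. (\<lambda>i. g (i + 2)) (2 * j)) sums (- cot_tail s)
      \<longleftrightarrow> (\<lambda>i. g (i + 2)) sums (- cot_tail s)"
  proof (rule sums_mono_reindex)
    show "strict_mono (\<lambda>j::nat. 2 * j)"
      by (simp add: strict_mono_def)
    show "g (n + 2) = 0" if "n \<notin> range (\<lambda>j::nat. 2 * j)" for n
      using that by (auto simp: g_def bernoulli_explicit_def elim!: evenE)
  qed
  ultimately have "(\<lambda>i. g (i + 2)) sums (- cot_tail s)"
    by simp
  then have "g sums (- cot_tail s + (\<Sum>i<2. g i))"
    by (simp only: sums_iff_shift)
  moreover have "(\<Sum>i<2. g i) = 1 - t / 2"
    by (simp add: g_def bernoulli_explicit_def eval_nat_numeral)
  ultimately show ?thesis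
    by (simp add: g_def[abs_def] s_def)
qed

lemma bernoulli_eq_explicit: "bernoulli = bernoulli_explicit"
  unfolding bernoulli_def
proof (rule the_equality)
  have gen_fun: "(\<lambda>n. bernoulli_explicit n * t^n / fact n) sums (t / (exp t - 1))"
    if "t \<noteq> 0" "\<bar>t\<bar> < 2 * pi" for t :: real
    using bernoulli_explicit_sums[OF that(2)] t_div_exp_minus_one_eq_cot_tail[OF that] by simp
  then show "\<forall>t::real. 0 < \<bar>t\<bar> \<and> \<bar>t\<bar> < 2 * pi
      \<longrightarrow> (\<lambda>n. bernoulli_explicit n * t^n / fact n) sums (t / (exp t - 1))"
    by simp
  fix B :: "nat \<Rightarrow> real"
  assume "\<forall>t. 0 < \<bar>t\<bar> \<and> \<bar>t\<bar> < 2 * pi \<longrightarrow> (\<lambda>n. B n * t^n / fact n) sums (t / (exp t - 1))"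
  then have "(\<lambda>n. B n / fact n) = (\<lambda>n. bernoulli_explicit n / fact n)"
    using gen_fun by (intro powser_coeffs_unique_punctured[where r = "2 * pi"]) auto
  then show "B = bernoulli_explicit"
    by (simp add: fun_eq_iff)
qed

lemma abs_bernoulli_even:
  "\<bar>bernoulli (2 * k + 2)\<bar> = cot_coeff k * fact (2 * k + 2) / 4 ^ (k + 1)"
proof -
  have "(2 * k + 2) div 2 = k + 1"
    by simp
  then show ?thesis
    using cot_coeff_pos[of k]
    by (simp add: bernoulli_eq_explicit bernoulli_explicit_def abs_mult)
qed

lemma thm8_coeff_nonneg: "0 \<le> thm8_coeff k"
  by (simp add: thm8_coeff_def)

lemma thm8_coeff_eq_cot_coeff: "thm8_coeff k = 2 * real k * cot_coeff k"
proof -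
  have "(2::real) ^ (2 * k + 3) = 2 * 4 ^ (k + 1)"
    by (simp add: power_add power_mult)
  moreover have "fact (2 * k + 2) \<noteq> (0::real)"
    by simp
  ultimately show ?thesis
    unfolding thm8_coeff_def abs_bernoulli_even by (simp del: fact_Suc)
qed

section \<open>Series expansions of both sides\<close>

lemma cot_tail_deriv:
  assumes s: "\<bar>s\<bar> < pi^2"
  shows "summable (\<lambda>n. (real n + 1) * cot_coeff n * s^n)"
    and "(cot_tail has_field_derivative (\<Sum>n. (real n + 1) * cot_coeff n * s^n)) (at s)"
proof -
  define a where "a n = (if n = 0 then 0 else cot_coeff (n - 1))" for n
  have a_sums: "(\<lambda>n. a n * z^n) sums cot_tail z" if "\<bar>z\<bar> < pi^2" for z
    using cot_tail_sums[OF that] sums_Suc_iff[of "\<lambda>n. a n * z^n"] by (simp add: a_def)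
  have diffs_a: "diffs a = (\<lambda>n. (real n + 1) * cot_coeff n)"
    by (simp add: fun_eq_iff diffs_def a_def add.commute)
  define K where "K = (\<bar>s\<bar> + pi^2) / 2"
  have K: "\<bar>s\<bar> < \<bar>K\<bar>" "\<bar>K\<bar> < pi^2"
    using s by (auto simp: K_def)
  have "summable (\<lambda>n. a n * K^n)"
    using a_sums[OF K(2)] by (rule sums_summable)
  then have "summable (\<lambda>n. diffs a n * s^n)"
    using s a_sums by (intro termdiff_converges[of s "pi^2"]) (auto intro: sums_summable)
  then show "summable (\<lambda>n. (real n + 1) * cot_coeff n * s^n)"
    by (simp add: diffs_a)
  have "((\<lambda>z. \<Sum>n. a n * z^n) has_field_derivative (\<Sum>n. diffs a n * s^n)) (at s)"
    using K \<open>summable (\<lambda>n. a n * K^n)\<close> by (intro termdiffs_strong) auto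
  then have "((\<lambda>z. \<Sum>n. a n * z^n) has_field_derivative
      (\<Sum>n. (real n + 1) * cot_coeff n * s^n)) (at s)"
    by (simp only: diffs_a)
  then show "(cot_tail has_field_derivative (\<Sum>n. (real n + 1) * cot_coeff n * s^n)) (at s)"
  proof (rule has_field_derivative_transform_within_open[where S = "ball 0 (pi^2)"])
    show "(\<Sum>n. a n * z^n) = cot_tail z" if "z \<in> ball 0 (pi^2)" for z
      using a_sums[of z] that by (simp add: sums_iff)
  qed (use s in auto)
qed

text \<open>Differentiating \<open>x cot x = 1 - cot_tail (x\<^sup>2)\<close> yields a series for \<open>x / sin\<^sup>2 x\<close>.\<close>

lemma x_div_sin_squared_eq:
  fixes x :: real
  assumes x: "0 < x" "x < pi"
  shows "(x / sin x)^2 = x * cot x + 2 * x^2 * (\<Sum>n. (real n + 1) * cot_coeff n * (x^2)^n)"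
proof -
  define D where "D = (\<Sum>n. (real n + 1) * cot_coeff n * (x^2)^n)"
  have "\<bar>x\<bar>^2 < pi^2"
    using x by (intro power_strict_mono) auto
  then have "\<bar>x^2\<bar> < pi^2"
    by simp
  have "sin x > 0"
    using x by (simp add: sin_gt_zero)
  then have "((\<lambda>y. y * cot y) has_field_derivative cot x - x / (sin x)^2) (at x)"
    using DERIV_mult[OF DERIV_ident DERIV_cot[of x]] by (simp add: inverse_eq_divide)
  moreover have "((\<lambda>y. y * cot y) has_field_derivative - (D * (2 * x))) (at x)"
  proof (rule has_field_derivative_transform_within_open[where S = "{0<..<pi}"])
    have "((\<lambda>y. y^2) has_field_derivative 2 * x) (at x)"
      by (auto intro!: derivative_eq_intros)
    from DERIV_chain2[OF cot_tail_deriv(2)[OF \<open>\<bar>x^2\<bar> < pi^2\<close>] this]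
    show "((\<lambda>y. 1 - cot_tail (y^2)) has_field_derivative - (D * (2 * x))) (at x)"
      unfolding D_def by (auto intro!: derivative_eq_intros)
    show "1 - cot_tail (y^2) = y * cot y" if "y \<in> {0<..<pi}" for y
      using x_cot_x_eq_cot_tail[of y] that by simp
  qed (use x in auto)
  ultimately have "cot x - x / (sin x)^2 = - (D * (2 * x))"
    by (rule DERIV_unique)
  then have "(x / sin x)^2 = x * (cot x + 2 * x * D)"
    by (simp add: power_divide algebra_simps power2_eq_square)
  then show ?thesis
    by (simp add: D_def algebra_simps power2_eq_square)
qed

lemma power_even_eq_power2:
  fixes x :: "'a :: monoid_mult"
  shows "x ^ (2 * j + 2) = (x^2) ^ (j + 1)"
  by (subst power_mult[symmetric]) (simp add: algebra_simps)

lemma thm8_lhs_sums: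
  fixes x :: real
  assumes x: "0 < x" "x < pi"
  shows "(\<lambda>j. thm8_coeff j * x^(2 * j + 2)) sums ((x / sin x)^2 + x / tan x - 2)"
proof -
  define s where "s = x^2"
  have "\<bar>x\<bar>^2 < pi^2"
    using x by (intro power_strict_mono) auto
  then have s: "\<bar>s\<bar> < pi^2"
    by (simp add: s_def)
  have "(\<lambda>j. 2 * s * ((real j + 1) * cot_coeff j * s^j) - 2 * (cot_coeff j * s^(j + 1)))
      sums (2 * s * (\<Sum>n. (real n + 1) * cot_coeff n * s^n) - 2 * cot_tail s)"
    using cot_tail_deriv(1)[OF s] cot_tail_sums[OF s]
    by (intro sums_diff sums_mult summable_sums)
  moreover have "2 * s * ((real j + 1) * cot_coeff j * s^j) - 2 * (cot_coeff j * s^(j + 1))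
      = thm8_coeff j * x^(2 * j + 2)" for j
    unfolding power_even_eq_power2 s_def thm8_coeff_eq_cot_coeff by (simp add: algebra_simps)
  moreover have "x / tan x = x * cot x"
    by (simp add: cot_altdef divide_inverse)
  ultimately show ?thesis
    using x_div_sin_squared_eq[OF x] x_cot_x_eq_cot_tail[of x] x by (simp add: s_def)
qed

lemma x_tan_x_sums:
  fixes x :: real
  assumes x: "0 < x" "x < pi / 2"
  shows "(\<lambda>j. (4^(j + 1) - 1) * cot_coeff j * x^(2 * j + 2)) sums (x * tan x)"
proof -
  have "\<bar>2 * x\<bar>^2 < pi^2"
    using x by (intro power_strict_mono) auto
  then have "4 * x^2 < pi^2"
    by (simp add: power_mult_distrib)
  moreover from this have "x^2 < pi^2"
    using zero_le_power2[of x] by linarith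
  ultimately have s: "\<bar>x^2\<bar> < pi^2" "\<bar>4 * x^2\<bar> < pi^2"
    by simp_all
  have "sin x > 0" "cos x > 0"
    using x by (simp_all add: sin_gt_zero cos_gt_zero)
  then have "x * tan x = x * cot x - 2 * x * cot (2 * x)"
    unfolding tan_def cot_def sin_double cos_double by (simp add: field_simps power2_eq_square)
  also have "\<dots> = cot_tail (4 * x^2) - cot_tail (x^2)"
    using x_cot_x_eq_cot_tail[of x] x_cot_x_eq_cot_tail[of "2 * x"] x
    by (simp add: power_mult_distrib)
  finally have "x * tan x = cot_tail (4 * x^2) - cot_tail (x^2)" .
  moreover have "(\<lambda>j. cot_coeff j * (4 * x^2)^(j + 1) - cot_coeff j * (x^2)^(j + 1))
      sums (cot_tail (4 * x^2) - cot_tail (x^2))"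
    using s by (intro sums_diff cot_tail_sums)
  moreover have "cot_coeff j * (4 * x^2)^(j + 1) - cot_coeff j * (x^2)^(j + 1)
      = (4^(j + 1) - 1) * cot_coeff j * x^(2 * j + 2)" for j
    unfolding power_even_eq_power2 by (simp add: algebra_simps)
  ultimately show ?thesis
    by simp
qed

section \<open>The bounds and their optimality\<close>

lemma pi_squared_lt_10: "pi^2 < 10"
proof -
  have "pi < 3.15"
    using pi_approx by simp
  then have "pi^2 < 3.15^2"
    by (intro power_strict_mono) (use pi_gt_zero in auto)
  then show ?thesis
    by (simp add: power2_eq_square)
qed

lemma five_mul_Suc_le_four_power: "1 \<le> j \<Longrightarrow> 5 * (real j + 1) \<le> 4^(j + 1) - 1"
proof (induction j rule: dec_induct)
  case (step j)
  have "(1::real) \<le> 4^(j + 1)"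
    by (rule one_le_power) simp
  with step.IH show ?case
    by simp
qed simp

lemma cot_coeff_shift_le: "cot_coeff (j + N) \<le> cot_coeff N / pi^(2 * j)"
proof -
  have "zeta_nat (2 * (j + N) + 2) \<le> zeta_nat (2 * N + 2)"
    by (rule zeta_nat_antimono) auto
  moreover have "pi^(2 * (j + N) + 2) = pi^(2 * j) * pi^(2 * N + 2)"
    by (simp flip: power_add)
  ultimately show ?thesis
    by (simp add: cot_coeff_def divide_right_mono field_simps)
qed

lemma cot_coeff_ge: "2 / pi^(2 * j + 2) \<le> cot_coeff j"
  using zeta_nat_ge_1[of "2 * j + 2"] by (simp add: cot_coeff_def divide_right_mono)

lemma thm8_coeff_pos: "1 \<le> k \<Longrightarrow> 0 < thm8_coeff k"
  using cot_coeff_pos[of k] by (simp add: thm8_coeff_eq_cot_coeff)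

lemma thm8_coeff_shift_lt:
  assumes N: "1 \<le> N" and j: "1 \<le> j"
  shows "thm8_coeff (j + N) < thm8_coeff N * (4^(j + 1) - 1) * cot_coeff j"
proof -
  define P where "P = pi^(2 * j)"
  have P: "0 < P" "pi^(2 * j + 2) = P * pi^2"
    by (simp_all add: P_def power_add power2_eq_square)
  have "(real j + real N) * pi^2 < 2 * real N * (4^(j + 1) - 1)"
  proof -
    have "real j + real N \<le> real N * (real j + 1)"
      using N j by (simp add: algebra_simps)
    then have "(real j + real N) * pi^2 \<le> real N * (real j + 1) * pi^2"
      by (simp add: mult_right_mono)
    also have "\<dots> < real N * (real j + 1) * 10"
      using pi_squared_lt_10 N by (intro mult_strict_left_mono) auto
    also have "\<dots> \<le> 2 * real N * (4^(j + 1) - 1)"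
      using mult_left_mono[OF five_mul_Suc_le_four_power[OF j], of "2 * real N"]
      by (simp add: algebra_simps)
    finally show ?thesis .
  qed
  have "thm8_coeff (j + N) \<le> 2 * (real j + real N) * (cot_coeff N / P)"
    unfolding thm8_coeff_eq_cot_coeff P_def of_nat_add
    by (intro mult_left_mono cot_coeff_shift_le) auto
  also have "\<dots> = 2 * cot_coeff N * ((real j + real N) * pi^2) / (P * pi^2)"
    using P by (simp add: field_simps)
  also have "\<dots> < 2 * cot_coeff N * (2 * real N * (4^(j + 1) - 1)) / (P * pi^2)"
    using \<open>(real j + real N) * pi^2 < _\<close> P cot_coeff_pos[of N]
    by (intro divide_strict_right_mono mult_strict_left_mono) auto
  also have "\<dots> = thm8_coeff N * (4^(j + 1) - 1) * (2 / pi^(2 * j + 2))"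
    using P by (simp add: thm8_coeff_eq_cot_coeff)
  also have "\<dots> \<le> thm8_coeff N * (4^(j + 1) - 1) * cot_coeff j"
    using cot_coeff_ge[of j] thm8_coeff_nonneg[of N] one_le_power[of "4::real" "j + 1"]
    by (intro mult_left_mono mult_nonneg_nonneg) auto
  finally show ?thesis .
qed

lemma sums_strict_mono:
  fixes f g :: "nat \<Rightarrow> real"
  assumes "f sums a" "g sums b" "\<And>n. f n \<le> g n" "f i < g i"
  shows "a < b"
proof -
  have "(\<lambda>n. g n - f n) sums (b - a)"
    using assms(1,2) by (rule sums_diff[rotated])
  moreover have "0 < suminf (\<lambda>n. g n - f n)"
    using assms(3,4) calculation by (intro suminf_pos2[where i = i]) (auto dest: sums_summable)
  ultimately show ?thesis
    by (simp add: sums_iff)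
qed

lemma thm8_bound_eq: "thm8_bound N c x = thm8_bound N 0 x + c * x^(2 * N + 1) * tan x"
  by (simp add: thm8_bound_def)

lemma thm8_bound_zero_pos: "0 < thm8_bound N 0 x"
proof -
  have "0 \<le> thm8_coeff k * x^(2 * k + 2)" for k
    unfolding power_even_eq_power2 using thm8_coeff_nonneg by simp
  then show ?thesis
    by (simp add: thm8_bound_def sum_nonneg add_pos_nonneg)
qed

lemma thm8_remainder_sums:
  assumes N: "1 \<le> N" and x: "0 < x" "x < pi"
  shows "(\<lambda>j. thm8_coeff (j + N) * x^(2 * (j + N) + 2))
           sums ((x / sin x)^2 + x / tan x - thm8_bound N 0 x)"
proof -
  have "(\<Sum>k<N. thm8_coeff k * x^(2 * k + 2)) = (\<Sum>k = 1..N - 1. thm8_coeff k * x^(2 * k + 2))"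
  proof -
    have "{..<N} = insert 0 {1..N - 1}"
      using N by auto
    then show ?thesis
      by (simp add: thm8_coeff_eq_cot_coeff)
  qed
  then show ?thesis
    using sums_iff_shift[of "\<lambda>j. thm8_coeff j * x^(2 * j + 2)" N] thm8_lhs_sums[OF x]
    by (simp add: thm8_bound_def algebra_simps)
qed

lemma thm8_remainder_ge:
  assumes N: "1 \<le> N" and x: "0 < x" "x < pi"
  shows "thm8_coeff N * x^(2 * N + 2) \<le> (x / sin x)^2 + x / tan x - thm8_bound N 0 x"
  using sum_le_suminf[OF sums_summable[OF thm8_remainder_sums[OF assms]], of "{0}"]
    sums_unique[OF thm8_remainder_sums[OF assms]] x thm8_coeff_nonneg
  by simp

text \<open>The remainder is compared termwise with \<open>thm8_coeff N x\<^sup>2\<^sup>N\<close> times the series of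
  \<open>x tan x\<close>; the leading terms agree since \<open>cot_coeff 0 = 1 / 3\<close>.\<close>

lemma thm8_remainder_lt:
  assumes N: "1 \<le> N" and x: "0 < x" "x < pi / 2"
  shows "(x / sin x)^2 + x / tan x - thm8_bound N 0 x < thm8_coeff N * x^(2 * N + 1) * tan x"
proof -
  define P where "P j = x^(2 * N) * x^(2 * j + 2)" for j
  have P: "0 < P j" for j
    using x by (simp add: P_def)
  have P_eq: "x^(2 * (j + N) + 2) = P j" for j
    unfolding P_def power_add[symmetric] by (simp add: algebra_simps)
  have "x < pi"
    using x by simp
  with thm8_remainder_sums[OF N x(1)]
  have R: "(\<lambda>j. thm8_coeff (j + N) * P j) sums ((x / sin x)^2 + x / tan x - thm8_bound N 0 x)"
    by (simp only: P_eq)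
  have "thm8_coeff N * x^(2 * N) * (x * tan x) = thm8_coeff N * x^(2 * N + 1) * tan x"
    by simp
  then have W: "(\<lambda>j. thm8_coeff N * (4^(j + 1) - 1) * cot_coeff j * P j)
      sums (thm8_coeff N * x^(2 * N + 1) * tan x)"
    using sums_mult[OF x_tan_x_sums[OF x], of "thm8_coeff N * x^(2 * N)"]
    by (simp add: P_def mult_ac)
  have "thm8_coeff (j + N) \<le> thm8_coeff N * (4^(j + 1) - 1) * cot_coeff j" for j
    using thm8_coeff_shift_lt[OF N, of j] by (cases "j = 0") (auto simp: cot_coeff_0)
  then show ?thesis
    using thm8_coeff_shift_lt[OF N, of 1] P
    by (intro sums_strict_mono[OF R W, where i = 1] mult_right_mono mult_strict_right_mono)
      (auto intro: less_imp_le)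
qed

lemma thm8_lhs_lt_10:
  fixes x :: real
  assumes x: "pi / 4 \<le> x" "x < pi / 2"
  shows "(x / sin x)^2 + x / tan x < 10"
proof -
  have "0 < x" "x < 2"
    using x pi_gt_zero pi_less_4 by linarith+
  have "sqrt 2 / 2 \<le> sin x"
    using sin_monotone_2pi_le[of "pi / 4" x] x sin_45 by simp
  then have "(sqrt 2 / 2)^2 \<le> (sin x)^2"
    by (intro power_mono) auto
  then have sin2: "1 / 2 \<le> (sin x)^2"
    by (simp add: power_divide)
  have "(x / sin x)^2 = x^2 / (sin x)^2"
    by (simp add: power_divide)
  also have "\<dots> \<le> x^2 / (1 / 2)"
    using sin2 by (intro divide_left_mono) auto
  also have "\<dots> < 2 * 2^2"
    using \<open>0 < x\<close> \<open>x < 2\<close> power_strict_mono[of x 2 2] by simp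
  finally have "(x / sin x)^2 < 8"
    by simp
  moreover have "x / tan x \<le> x"
  proof -
    have "sin x > 0" "cos x > 0"
      using \<open>0 < x\<close> x by (simp_all add: sin_gt_zero cos_gt_zero)
    moreover have "cos x \<le> cos (pi / 4)"
      using x \<open>0 < x\<close> by (intro cos_monotone_0_pi_le) auto
    ultimately have "cos x \<le> sin x"
      using \<open>sqrt 2 / 2 \<le> sin x\<close> cos_45 by simp
    then show ?thesis
      using \<open>0 < x\<close> \<open>sin x > 0\<close> by (simp add: tan_def field_simps mult_left_mono)
  qed
  ultimately show ?thesis
    using \<open>x < 2\<close> by linarith
qed

lemma exists_tan_ge: "\<exists>x. pi / 4 < x \<and> x < pi / 2 \<and> M \<le> tan x"
proof (intro exI conjI)
  show "pi / 4 < arctan (max 2 M)"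
    using arctan_less_iff[of 1 "max 2 M"] by (simp add: arctan_one)
  show "arctan (max 2 M) < pi / 2"
    by (rule arctan_ubound)
  show "M \<le> tan (arctan (max 2 M))"
    by (simp add: tan_arctan)
qed

lemma le_if_mult_lt_tan:
  fixes a q :: real
  assumes "0 < a" and lt: "\<And>x. 0 < x \<Longrightarrow> x < pi / 2 \<Longrightarrow> a * x < q * tan x"
  shows "a \<le> q"
proof (rule ccontr)
  assume "\<not> a \<le> q"
  show False
  proof (cases "q \<le> 0")
    case True
    have "0 < a * (pi / 4)"
      using \<open>0 < a\<close> by simp
    with True show False
      using lt[of "pi / 4"] by (simp add: tan_45)
  next
    case False
    text \<open>At the point where \<open>cos x = q / a\<close>, \<open>sin x \<le> x\<close> gives \<open>q tan x \<le> a x\<close>.\<close>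
    define r where "r = q / a"
    define x where "x = arccos r"
    have r: "0 < r" "r < 1"
      using False \<open>\<not> a \<le> q\<close> \<open>0 < a\<close> by (auto simp: r_def)
    then have x: "0 < x" "x < pi / 2" "cos x = r"
      using arccos_less_arccos[of 0 r] arccos_less_arccos[of r 1] by (auto simp: x_def)
    have "sin x \<le> x"
      using x by (intro sin_x_le_x) simp
    then have "tan x \<le> x / r"
      using r by (simp add: tan_def x divide_right_mono)
    then have "q * tan x \<le> q * (x / r)"
      using False by (intro mult_left_mono) auto
    also have "\<dots> = a * x"
      using False \<open>0 < a\<close> by (simp add: r_def)
    finally have "q * tan x \<le> a * x" .
    with lt[OF x(1,2)] show False
      by simp
  qed
qed

lemma thm8_lower_const_optimal:
  assumes lt: "\<forall>x::real. 0 < x \<and> x < pi / 2 \<longrightarrow> thm8_bound N p x < (x / sin x)^2 + x / tan x"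
  shows "p \<le> 0"
proof (rule ccontr)
  assume "\<not> p \<le> 0"
  define c where "c = p * (pi / 4)^(2 * N + 1)"
  have "0 < c"
    using \<open>\<not> p \<le> 0\<close> by (simp add: c_def)
  obtain x where x: "pi / 4 < x" "x < pi / 2" "10 / c \<le> tan x"
    using exists_tan_ge by blast
  have "0 < 10 / c"
    using \<open>0 < c\<close> by simp
  then have "0 \<le> tan x"
    using x(3) by linarith
  have "(pi / 4)^(2 * N + 1) \<le> x^(2 * N + 1)"
    using x(1) by (intro power_mono) auto
  have "c * tan x \<le> p * x^(2 * N + 1) * tan x"
    using \<open>\<not> p \<le> 0\<close> \<open>0 \<le> tan x\<close> \<open>(pi / 4)^(2 * N + 1) \<le> x^(2 * N + 1)\<close>
    unfolding c_def by (intro mult_right_mono mult_left_mono) auto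
  also have "\<dots> < thm8_bound N p x"
    using thm8_bound_eq[of N p x] thm8_bound_zero_pos[of N x] by simp
  also have "\<dots> < (x / sin x)^2 + x / tan x"
    using lt x(1,2) pi_gt_zero by simp
  also have "\<dots> < 10"
    using x by (intro thm8_lhs_lt_10) auto
  finally have "c * tan x < 10" .
  moreover have "10 \<le> c * tan x"
    using x(3) \<open>0 < c\<close> by (simp add: field_simps)
  ultimately show False
    by simp
qed

lemma thm8_upper_const_optimal:
  assumes N: "1 \<le> N"
    and lt: "\<forall>x::real. 0 < x \<and> x < pi / 2 \<longrightarrow> (x / sin x)^2 + x / tan x < thm8_bound N q x"
  shows "thm8_coeff N \<le> q"
proof (rule le_if_mult_lt_tan)
  show "0 < thm8_coeff N"
    using N by (rule thm8_coeff_pos)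
  fix x :: real
  assume x: "0 < x" "x < pi / 2"
  then have "x < pi"
    by simp
  with x have "thm8_coeff N * x^(2 * N + 2) \<le> (x / sin x)^2 + x / tan x - thm8_bound N 0 x"
    by (intro thm8_remainder_ge N)
  moreover have "(x / sin x)^2 + x / tan x < thm8_bound N q x"
    using lt x by simp
  ultimately have "thm8_coeff N * x^(2 * N + 2) < q * x^(2 * N + 1) * tan x"
    using thm8_bound_eq[of N q x] by linarith
  then have "(thm8_coeff N * x) * x^(2 * N + 1) < (q * tan x) * x^(2 * N + 1)"
    by (simp add: algebra_simps)
  then show "thm8_coeff N * x < q * tan x"
    using x by (simp add: mult_less_cancel_right_pos)
qed

theorem theorem8:
  fixes N :: nat
  assumes "N \<ge> 1"
  shows "(\<forall>x::real. 0 < x \<and> x < pi / 2 \<longrightarrow>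
            thm8_bound N 0 x < (x / sin x) ^ 2 + x / tan x \<and>
            (x / sin x) ^ 2 + x / tan x < thm8_bound N (thm8_coeff N) x)
       \<and> (\<forall>p::real. (\<forall>x::real. 0 < x \<and> x < pi / 2 \<longrightarrow>
            thm8_bound N p x < (x / sin x) ^ 2 + x / tan x) \<longrightarrow> p \<le> 0)
       \<and> (\<forall>q::real. (\<forall>x::real. 0 < x \<and> x < pi / 2 \<longrightarrow>
            (x / sin x) ^ 2 + x / tan x < thm8_bound N q x) \<longrightarrow> thm8_coeff N \<le> q)"
proof (intro conjI allI impI)
  fix x :: real
  assume x: "0 < x \<and> x < pi / 2"
  then have "0 < thm8_coeff N * x^(2 * N + 2)"
    using thm8_coeff_pos[OF assms] by simp
  then show "thm8_bound N 0 x < (x / sin x)^2 + x / tan x"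
    using thm8_remainder_ge[OF assms, of x] x by simp
  show "(x / sin x)^2 + x / tan x < thm8_bound N (thm8_coeff N) x"
    using thm8_remainder_lt[OF assms, of x] x thm8_bound_eq[of N "thm8_coeff N" x] by simp
qed (use thm8_lower_const_optimal thm8_upper_const_optimal[OF assms] in blast)+

end
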